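(* Assume $a>2b$. For every self-intersected 6-periodic of type I in the elliptic billiard, the angles $\theta_i'$ between consecutive sides of its outer polygon satisfy $$\sum_{i=1}^6\cos(2\theta_i')=-\frac{2(a^2-4ab+b^2)}{(a-b)^2}=JL-6.$$
   Context: The elliptic billiard is $\mathcal{E}: x^2/a^2+y^2/b^2=1$, $a>b>0$, $c=\sqrt{a^2-b^2}$. An $N$-periodic is a closed billiard trajectory $P_1\dots P_N$ on $\mathcal{E}$ (at each vertex the normal to $\mathcal{E}$ bisects the angle between the incident segments); all segments are tangent to a fixed confocal conic (the caustic), and all closed trajectories tangent to a given caustic form a one-parameter family. Type I self-intersected 6-periodics (existing for $a>2b$) are the 6-periodics tangent to the confocal hyperbola $x^2/a''^2-y^2/b''^2=1$ with $a''=\frac{a^{3/2}\sqrt{a-2b}}{a-b}$, $b''=\frac{b^{3/2}\sqrt{2a-b}}{a-b}$; one member is $P_1=(0,b)$, $P_2=(k_x,k_y)$, $P_3=(k_x,-k_y)$, $P_4=(0,-b)$, $P_5=-P_2$, $P_6=-P_3$ with $k_x=\frac{a\sqrt{a(a-2b)}}{b-a}$, $k_y=\frac{b^2}{b-a}$. The outer polygon has vertices $P_i'$ = intersection of the tangent lines to $\mathcal{E}$ at $P_i$ and $P_{i+1}$; $\theta_i'$ is the angle at $P_i'$ between these two lines (the value of $\cos 2\theta_i'$ does not depend on which of the supplementary angles is chosen). $L=\frac{4(a^2-ab+b^2)}{a-b}$ is the common perimeter and $J=\frac12\nabla f(P_i)\cdot\hat v>0$ is Joachimsthal's constant ($f=x^2/a^2+y^2/b^2$),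 here $J=1/(a-b)$. *)

theory Defs
  imports "HOL-Analysis.Analysis"
begin

definition cross2 :: "real \<times> real \<Rightarrow> real \<times> real \<Rightarrow> real" where
  "cross2 u v = fst u * snd v - snd u * fst v"

definition unitv :: "real \<times> real \<Rightarrow> real \<times> real" where
  "unitv u = (1 / norm u) *\<^sub>R u"

definition on_ellipse :: "real \<Rightarrow> real \<Rightarrow> real \<times> real \<Rightarrow> bool" where
  "on_ellipse a b p \<longleftrightarrow> (fst p)\<^sup>2 / a\<^sup>2 + (snd p)\<^sup>2 / b\<^sup>2 = 1"

text \<open>(Half) gradient of f = x^2/a^2 + y^2/b^2, i.e. a normal vector to the ellipse at p.\<close>
definition ell_normal :: "real \<Rightarrow> real \<Rightarrow> real \<times> real \<Rightarrow> real \<times> real" where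
  "ell_normal a b p = (fst p / a\<^sup>2, snd p / b\<^sup>2)"

definition ell_tangent :: "real \<Rightarrow> real \<Rightarrow> real \<times> real \<Rightarrow> real \<times> real" where
  "ell_tangent a b p = (- snd p / b\<^sup>2, fst p / a\<^sup>2)"

text \<open>Billiard reflection law at vertex P with neighbours Q (previous) and R (next):
  the normal to the ellipse at P bisects the angle QPR, i.e. it is parallel to the sum of
  the unit vectors from P towards Q and towards R.\<close>
definition billiard_reflects :: "real \<Rightarrow> real \<Rightarrow> real \<times> real \<Rightarrow> real \<times> real \<Rightarrow> real \<times> real \<Rightarrow> bool" where
  "billiard_reflects a b Q P R \<longleftrightarrow>
     Q \<noteq> P \<and> R \<noteq> P \<and> cross2 (unitv (Q - P) + unitv (R - P)) (ell_normal a b P) = 0"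

text \<open>The line through P and Q is tangent to the hyperbola x^2/A^2 - y^2/B^2 = 1:
  it passes through a point h of the hyperbola and is orthogonal to the hyperbola's normal at h.\<close>
definition tangent_to_hyperbola :: "real \<Rightarrow> real \<Rightarrow> real \<times> real \<Rightarrow> real \<times> real \<Rightarrow> bool" where
  "tangent_to_hyperbola A B P Q \<longleftrightarrow>
     (\<exists>h. (fst h)\<^sup>2 / A\<^sup>2 - (snd h)\<^sup>2 / B\<^sup>2 = 1 \<and> cross2 (h - P) (Q - P) = 0
          \<and> inner (Q - P) (fst h / A\<^sup>2, - snd h / B\<^sup>2) = 0)"

definition caustic_a :: "real \<Rightarrow> real \<Rightarrow> real" where
  "caustic_a a b = a powr (3/2) * sqrt (a - 2*b) / (a - b)"

definition caustic_b :: "real \<Rightarrow> real \<Rightarrow> real" where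
  "caustic_b a b = b powr (3/2) * sqrt (2*a - b) / (a - b)"

definition billiard_periodic :: "real \<Rightarrow> real \<Rightarrow> nat \<Rightarrow> (nat \<Rightarrow> real \<times> real) \<Rightarrow> bool" where
  "billiard_periodic a b N P \<longleftrightarrow>
     (\<forall>i. on_ellipse a b (P i)) \<and> (\<forall>i. P (i + N) = P i) \<and>
     (\<forall>i. billiard_reflects a b (P i) (P (i + 1)) (P (i + 2)))"

definition typeI_6periodic :: "real \<Rightarrow> real \<Rightarrow> (nat \<Rightarrow> real \<times> real) \<Rightarrow> bool" where
  "typeI_6periodic a b P \<longleftrightarrow> billiard_periodic a b 6 P \<and>
     (\<forall>i. tangent_to_hyperbola (caustic_a a b) (caustic_b a b) (P i) (P (i + 1)))"

definition dir_angle :: "real \<times> real \<Rightarrow> real \<times> real \<Rightarrow> real" where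
  "dir_angle u v = arccos (inner u v / (norm u * norm v))"

text \<open>theta'_i: angle at the outer-polygon vertex P'_i between the tangents to the ellipse
  at P_i and P_(i+1).\<close>
definition outer_angle :: "real \<Rightarrow> real \<Rightarrow> (nat \<Rightarrow> real \<times> real) \<Rightarrow> nat \<Rightarrow> real" where
  "outer_angle a b P i = dir_angle (ell_tangent a b (P i)) (ell_tangent a b (P (i + 1)))"

definition perimL :: "real \<Rightarrow> real \<Rightarrow> real" where
  "perimL a b = 4 * (a\<^sup>2 - a*b + b\<^sup>2) / (a - b)"

definition joachJ :: "real \<Rightarrow> real \<Rightarrow> real" where
  "joachJ a b = 1 / (a - b)"

end

theory Submission
  imports Defs
begin

text \<open>Write the vertices as P_i = (a cos t_i, b sin t_i) and z_i = cos t_i + \<i> sin t_i. Tangency of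
  the side P_i P_(i+1) to the caustic becomes (a - b)(b cos t_i cos t_(i+1) - a sin t_i sin t_(i+1)) = ab,
  and then cos 2\<theta>'_i = - cos (t_i - t_(i+1)), which the same relation rewrites in terms of
  cos (t_i + t_(i+1)) = Re (z_i z_(i+1)). In the z's the relation is a symmetric biquadratic, so the two
  neighbours of z_i are the roots of a quadratic with coefficients depending on z_i only (a double root
  exactly when the trajectory bounces back along the normal). Vieta's formulas around the hexagon give
  (a - b) \<Sum> z_i z_(i+1) = 2(a + b), and the sum of the cos 2\<theta>'_i follows.\<close>

text \<open>For unit \<open>z, w\<close>: the chord from \<open>(a Re z, b Im z)\<close> to \<open>(a Re w, b Im w)\<close> touches the caustic.\<close>
definition caustic_chord :: "real \<Rightarrow> real \<Rightarrow> complex \<Rightarrow> complex \<Rightarrow> bool" where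
  "caustic_chord a b z w \<longleftrightarrow> (a - b) * (b * Re z * Re w - a * Im z * Im w) = a * b"

text \<open>The normal to the ellipse at \<open>(a Re z, b Im z)\<close> touches the caustic.\<close>
definition normal_tangent_to_caustic :: "real \<Rightarrow> real \<Rightarrow> complex \<Rightarrow> bool" where
  "normal_tangent_to_caustic a b z \<longleftrightarrow> (a - b)\<^sup>2 * (b\<^sup>2 * (Re z)\<^sup>2 + a\<^sup>2 * (Im z)\<^sup>2) = a\<^sup>2 * b\<^sup>2"

lemma caustic_squares:
  assumes "0 < b" and "2 * b < a"
  shows "(caustic_a a b)\<^sup>2 = a ^ 3 * (a - 2 * b) / (a - b)\<^sup>2"
    and "(caustic_b a b)\<^sup>2 = b ^ 3 * (2 * a - b) / (a - b)\<^sup>2"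
proof -
  have "(x powr (3/2))\<^sup>2 = x ^ 3" if "x > 0" for x :: real
    using that by (simp add: power2_eq_square powr_add[symmetric] powr_numeral)
  then show "(caustic_a a b)\<^sup>2 = a ^ 3 * (a - 2 * b) / (a - b)\<^sup>2"
    and "(caustic_b a b)\<^sup>2 = b ^ 3 * (2 * a - b) / (a - b)\<^sup>2"
    using assms unfolding caustic_a_def caustic_b_def by (simp_all add: power_mult_distrib power_divide)
qed

text \<open>\<open>A\<close>, \<open>B\<close> are the squared semi-axes; the conclusion is the tangency condition for the line
  \<open>p + t d\<close>, free of the contact point \<open>h\<close>.\<close>
lemma hyperbola_tangent_line:
  fixes A B h1 h2 p1 p2 d1 d2 :: real
  assumes "A > 0" and "B > 0" and "h1\<^sup>2 / A - h2\<^sup>2 / B = 1"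
    and "(h1 - p1) * d2 - (h2 - p2) * d1 = 0"
    and "d1 * h1 / A - d2 * h2 / B = 0"
    and "d1 \<noteq> 0 \<or> d2 \<noteq> 0"
  shows "A * d2\<^sup>2 - B * d1\<^sup>2 = (p1 * d2 - p2 * d1)\<^sup>2"
proof -
  have tangency: "B * d1 * h1 = A * d2 * h2" using assms(1,2,5) by (simp add: field_simps)
  have on_hyperbola: "B * h1\<^sup>2 - A * h2\<^sup>2 = A * B" using assms(1-3) by (simp add: field_simps)
  define w where "w = p1 * d2 - p2 * d1"
  have w: "w = h1 * d2 - h2 * d1" using assms(4) unfolding w_def by (simp add: algebra_simps)
  define G where "G = A * d2\<^sup>2 - B * d1\<^sup>2"
  have "G \<noteq> 0"
  proof
    assume "G = 0"
    then have "B * d1\<^sup>2 * (B * h1\<^sup>2 - A * h2\<^sup>2) = 0"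
      using tangency unfolding G_def by algebra
    then have "d1 = 0" using on_hyperbola assms(1,2) by simp
    with \<open>G = 0\<close> have "d2 = 0" using assms(1) unfolding G_def by simp
    with \<open>d1 = 0\<close> show False using assms(6) by simp
  qed
  have "G\<^sup>2 * (A * B) = B * (G * h1)\<^sup>2 - A * (G * h2)\<^sup>2" using on_hyperbola by algebra
  also have "\<dots> = B * (A * d2 * w)\<^sup>2 - A * (B * d1 * w)\<^sup>2"
    unfolding G_def w using tangency by algebra
  also have "\<dots> = G * (A * B * w\<^sup>2)" unfolding G_def by algebra
  finally have "G * (A * B) = A * B * w\<^sup>2" using \<open>G \<noteq> 0\<close> by (simp add: power2_eq_square)
  then show ?thesis using assms(1,2) unfolding G_def w_def by simp
qed

lemma tangent_to_caustic_imp_caustic_chord: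
  assumes "0 < b" and "2 * b < a" and "cmod z = 1" and "cmod w = 1" and "z \<noteq> w"
    and "tangent_to_hyperbola (caustic_a a b) (caustic_b a b) (a * Re z, b * Im z) (a * Re w, b * Im w)"
  shows "caustic_chord a b z w"
proof -
  define x y x' y' where "x = Re z" "y = Im z" "x' = Re w" "y' = Im w"
  have unit: "x\<^sup>2 + y\<^sup>2 = 1" "x'\<^sup>2 + y'\<^sup>2 = 1"
    using assms(3,4) unfolding x_y_x'_y'_def by (simp_all add: cmod_def)
  have "a > 0" "a - b > 0" using assms(1,2) by auto
  define A B where "A = a ^ 3 * (a - 2 * b) / (a - b)\<^sup>2" "B = b ^ 3 * (2 * a - b) / (a - b)\<^sup>2"
  have "A > 0" "B > 0" unfolding A_B_def using assms(1,2) by simp_all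
  obtain h where h: "(fst h)\<^sup>2 / A - (snd h)\<^sup>2 / B = 1"
      "(fst h - a * x) * (b * y' - b * y) - (snd h - b * y) * (a * x' - a * x) = 0"
      "(a * x' - a * x) * fst h / A - (b * y' - b * y) * snd h / B = 0"
    using assms(6) caustic_squares[OF assms(1,2)] unfolding tangent_to_hyperbola_def A_B_def x_y_x'_y'_def
    by (auto simp: cross2_def)
  have "a * x' - a * x \<noteq> 0 \<or> b * y' - b * y \<noteq> 0"
    using assms(1,5) \<open>a > 0\<close> unfolding x_y_x'_y'_def by (auto simp: complex_eq_iff)
  note tangent = hyperbola_tangent_line[OF \<open>A > 0\<close> \<open>B > 0\<close> h this]
  have "(a - b)\<^sup>2 * A = a ^ 3 * (a - 2 * b)" "(a - b)\<^sup>2 * B = b ^ 3 * (2 * a - b)"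
    using \<open>a - b > 0\<close> unfolding A_B_def by simp_all
  with tangent have "a\<^sup>2 * b\<^sup>2 * (a * (a - 2 * b) * (y' - y)\<^sup>2 - b * (2 * a - b) * (x' - x)\<^sup>2)
      = a\<^sup>2 * b\<^sup>2 * ((a - b)\<^sup>2 * (x * y' - y * x')\<^sup>2)"
    by algebra
  then have "a * (a - 2 * b) * (y' - y)\<^sup>2 - b * (2 * a - b) * (x' - x)\<^sup>2 = (a - b)\<^sup>2 * (x * y' - y * x')\<^sup>2"
    using assms(1) \<open>a > 0\<close> by simp
  then have "(1 - (x * x' + y * y')) * ((a - b) * (b * x * x' - a * y * y') - a * b) = 0"
    using unit by algebra
  moreover have "1 - (x * x' + y * y') \<noteq> 0"
  proof
    assume "1 - (x * x' + y * y') = 0"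
    then have "(x - x')\<^sup>2 + (y - y')\<^sup>2 = 0" using unit by algebra
    then show False using assms(5) unfolding x_y_x'_y'_def by (simp add: sum_power2_eq_zero_iff complex_eq_iff)
  qed
  ultimately show ?thesis unfolding caustic_chord_def x_y_x'_y'_def by simp
qed

lemma caustic_chord_commute: "caustic_chord a b z w \<longleftrightarrow> caustic_chord a b w z"
  unfolding caustic_chord_def by (simp add: ac_simps)

lemma billiard_reflects_back:
  assumes "billiard_reflects a b Q P Q"
  shows "cross2 (Q - P) (ell_normal a b P) = 0"
proof -
  have "Q - P \<noteq> 0" using assms unfolding billiard_reflects_def by simp
  have "cross2 (unitv (Q - P) + unitv (Q - P)) (ell_normal a b P)
      = (2 / norm (Q - P)) * cross2 (Q - P) (ell_normal a b P)"
    unfolding unitv_def cross2_def by (simp add: algebra_simps)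
  then have "(2 / norm (Q - P)) * cross2 (Q - P) (ell_normal a b P) = 0"
    using assms unfolding billiard_reflects_def by simp
  then show ?thesis using \<open>Q - P \<noteq> 0\<close> by simp
qed

lemma caustic_chord_along_normal:
  assumes "0 < b" and "b < a" and "cmod z = 1" and "cmod w = 1" and "z \<noteq> w"
    and "caustic_chord a b z w"
    and "cross2 ((a * Re w, b * Im w) - (a * Re z, b * Im z)) (ell_normal a b (a * Re z, b * Im z)) = 0"
  shows "normal_tangent_to_caustic a b z"
proof -
  define x y x' y' where "x = Re z" "y = Im z" "x' = Re w" "y' = Im w"
  have unit: "x\<^sup>2 + y\<^sup>2 = 1" "x'\<^sup>2 + y'\<^sup>2 = 1"
    using assms(3,4) unfolding x_y_x'_y'_def by (simp_all add: cmod_def)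
  have chord: "(a - b) * (b * x * x' - a * y * y') = a * b"
    using assms(6) unfolding caustic_chord_def x_y_x'_y'_def .
  have "(a * x' - a * x) * (y / b) - (b * y' - b * y) * (x / a) = 0"
    using assms(1,2,7) unfolding x_y_x'_y'_def cross2_def ell_normal_def by (simp add: power2_eq_square)
  then have normal: "a\<^sup>2 * (x' - x) * y - b\<^sup>2 * (y' - y) * x = 0"
    using assms(1,2) by (simp add: field_simps power2_eq_square)
  define D where "D = (a * (x' - x))\<^sup>2 + (b * (y' - y))\<^sup>2"
  have "D \<noteq> 0"
    using assms(1,2,5) unfolding D_def x_y_x'_y'_def by (auto simp: sum_power2_eq_zero_iff complex_eq_iff)
  have chord_length: "(1 - (x * x' + y * y'))\<^sup>2 * (a - b)\<^sup>2 = D"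
    using unit chord unfolding D_def by algebra
  \<comment> \<open>Lagrange's identity for the chord and the normal direction \<open>(b x, a y)\<close>\<close>
  have "(1 - (x * x' + y * y'))\<^sup>2 * (a\<^sup>2 * b\<^sup>2) + (a\<^sup>2 * (x' - x) * y - b\<^sup>2 * (y' - y) * x)\<^sup>2
      = D * (b\<^sup>2 * x\<^sup>2 + a\<^sup>2 * y\<^sup>2)"
    using unit unfolding D_def by algebra
  then have "D * (b\<^sup>2 * x\<^sup>2 + a\<^sup>2 * y\<^sup>2) = (1 - (x * x' + y * y'))\<^sup>2 * (a\<^sup>2 * b\<^sup>2)"
    unfolding normal by simp
  then have "D * ((a - b)\<^sup>2 * (b\<^sup>2 * x\<^sup>2 + a\<^sup>2 * y\<^sup>2)) = ((1 - (x * x' + y * y'))\<^sup>2 * (a - b)\<^sup>2) * (a\<^sup>2 * b\<^sup>2)"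
    by (metis mult.assoc mult.left_commute)
  then have "D * ((a - b)\<^sup>2 * (b\<^sup>2 * x\<^sup>2 + a\<^sup>2 * y\<^sup>2)) = D * (a\<^sup>2 * b\<^sup>2)"
    unfolding chord_length .
  then show ?thesis using \<open>D \<noteq> 0\<close> unfolding normal_tangent_to_caustic_def x_y_x'_y'_def by simp
qed

lemma cos_double_dir_angle:
  fixes u v :: "real \<times> real"
  assumes "u \<noteq> 0" and "v \<noteq> 0"
  shows "cos (2 * dir_angle u v) = 2 * (inner u v)\<^sup>2 / (inner u u * inner v v) - 1"
proof -
  define r where "r = inner u v / (norm u * norm v)"
  have "\<bar>inner u v\<bar> \<le> norm u * norm v" by (rule Cauchy_Schwarz_ineq2)
  then have "\<bar>r\<bar> \<le> 1" unfolding r_def using assms by (simp add: abs_div divide_le_eq_1 abs_mult)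
  have "cos (2 * dir_angle u v) = 2 * (cos (arccos r))\<^sup>2 - 1"
    unfolding dir_angle_def r_def[symmetric] by (rule cos_double_cos)
  also have "\<dots> = 2 * r\<^sup>2 - 1" using \<open>\<bar>r\<bar> \<le> 1\<close> by simp
  also have "r\<^sup>2 = (inner u v)\<^sup>2 / (inner u u * inner v v)"
    unfolding r_def by (simp add: power_divide power_mult_distrib power2_norm_eq_inner)
  finally show ?thesis by simp
qed

lemma cos_double_tangent_angle:
  assumes "0 < b" and "b < a" and "cmod z = 1" and "cmod w = 1" and "caustic_chord a b z w"
  shows "cos (2 * dir_angle (ell_tangent a b (a * Re z, b * Im z)) (ell_tangent a b (a * Re w, b * Im w)))
      = - Re (z * cnj w)"
proof -
  define x y x' y' where "x = Re z" "y = Im z" "x' = Re w" "y' = Im w"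
  have unit: "x\<^sup>2 + y\<^sup>2 = 1" "x'\<^sup>2 + y'\<^sup>2 = 1"
    using assms(3,4) unfolding x_y_x'_y'_def by (simp_all add: cmod_def)
  have chord: "(a - b) * (b * x * x' - a * y * y') = a * b"
    using assms(5) unfolding caustic_chord_def x_y_x'_y'_def .
  define u v where "u = ell_tangent a b (a * x, b * y)" "v = ell_tangent a b (a * x', b * y')"
  have uv: "u = (- y / b, x / a)" "v = (- y' / b, x' / a)"
    using assms(1,2) unfolding u_v_def ell_tangent_def by (simp_all add: power2_eq_square)
  have "u \<noteq> 0" "v \<noteq> 0" using unit assms(1,2) unfolding uv by (auto simp: zero_prod_def)
  define I Iu Iv where "I = b\<^sup>2 * x * x' + a\<^sup>2 * y * y'"
    "Iu = b\<^sup>2 * x\<^sup>2 + a\<^sup>2 * y\<^sup>2" "Iv = b\<^sup>2 * x'\<^sup>2 + a\<^sup>2 * y'\<^sup>2"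
  have inner: "inner u v = I / (a\<^sup>2 * b\<^sup>2)" "inner u u = Iu / (a\<^sup>2 * b\<^sup>2)" "inner v v = Iv / (a\<^sup>2 * b\<^sup>2)"
    unfolding uv I_Iu_Iv_def using assms(1,2) by (simp_all add: field_simps power2_eq_square)
  have "Iu = b\<^sup>2 + (a\<^sup>2 - b\<^sup>2) * y\<^sup>2" "Iv = b\<^sup>2 + (a\<^sup>2 - b\<^sup>2) * y'\<^sup>2"
    using unit unfolding I_Iu_Iv_def by algebra+
  moreover have "a\<^sup>2 - b\<^sup>2 > 0" using assms(1,2) by (simp add: power_strict_mono)
  ultimately have "Iu > 0" "Iv > 0" using assms(1) by (simp_all add: add_pos_nonneg)
  have "(a - b)\<^sup>2 * (2 * I\<^sup>2) = (a - b)\<^sup>2 * ((1 - (x * x' + y * y')) * Iu * Iv)"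
    using unit chord unfolding I_Iu_Iv_def by algebra
  then have key: "2 * I\<^sup>2 = (1 - (x * x' + y * y')) * Iu * Iv" using assms(2) by simp
  have "cos (2 * dir_angle u v) = 2 * (I / (a\<^sup>2 * b\<^sup>2))\<^sup>2 / ((Iu / (a\<^sup>2 * b\<^sup>2)) * (Iv / (a\<^sup>2 * b\<^sup>2))) - 1"
    using cos_double_dir_angle[OF \<open>u \<noteq> 0\<close> \<open>v \<noteq> 0\<close>] unfolding inner .
  also have "\<dots> = 2 * I\<^sup>2 / (Iu * Iv) - 1" using assms(1,2) by (simp add: field_simps power2_eq_square)
  also have "\<dots> = - (x * x' + y * y')" using key \<open>Iu > 0\<close> \<open>Iv > 0\<close> by (simp add: field_simps)
  finally have "cos (2 * dir_angle u v) = - (x * x' + y * y')" .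
  then show ?thesis unfolding u_v_def x_y_x'_y'_def by simp
qed

lemma cos_double_tangent_angle_Re:
  assumes "0 < b" and "b < a" and "cmod z = 1" and "cmod w = 1" and "caustic_chord a b z w"
  shows "(a - b)\<^sup>2 * cos (2 * dir_angle (ell_tangent a b (a * Re z, b * Im z)) (ell_tangent a b (a * Re w, b * Im w)))
      = 2 * a * b - (a\<^sup>2 - b\<^sup>2) * Re (z * w)"
  using assms(5) unfolding cos_double_tangent_angle[OF assms] caustic_chord_def by simp algebra

lemma caustic_chord_biquadratic:
  assumes "cmod z = 1" "cmod w = 1" "caustic_chord a b z w"
  shows "of_real (a - b) * (of_real (a + b) * z\<^sup>2 * w\<^sup>2 + of_real (b - a) * (z\<^sup>2 + w\<^sup>2) + of_real (a + b))
           = of_real (4 * a * b) * z * w"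
proof -
  define x y x' y' :: complex where "x = of_real (Re z)" "y = of_real (Im z)" "x' = of_real (Re w)" "y' = of_real (Im w)"
  have z: "z = x + \<i> * y" and w: "w = x' + \<i> * y'"
    unfolding x_y_x'_y'_def by (simp_all add: complex_eq_iff)
  have "(Re z)\<^sup>2 + (Im z)\<^sup>2 = 1" "(Re w)\<^sup>2 + (Im w)\<^sup>2 = 1"
    using assms(1,2) by (simp_all add: cmod_def)
  then have "x\<^sup>2 + y\<^sup>2 = 1" "x'\<^sup>2 + y'\<^sup>2 = 1"
    unfolding x_y_x'_y'_def by (metis of_real_1 of_real_add of_real_power)+
  moreover have "(of_real a - of_real b) * (of_real b * x * x' - of_real a * y * y') = of_real a * of_real b"
    using arg_cong[OF assms(3)[unfolded caustic_chord_def], of complex_of_real]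
    unfolding x_y_x'_y'_def by simp
  moreover have "\<i>\<^sup>2 = (-1::complex)" by simp
  ultimately show ?thesis unfolding z w of_real_add of_real_diff of_real_mult of_real_numeral by algebra
qed

lemma quadratic_roots_sum_prod:
  fixes A B C w1 w2 :: "'a::idom"
  assumes "A \<noteq> 0" and "A * w1\<^sup>2 + B * w1 + C = 0" and "A * w2\<^sup>2 + B * w2 + C = 0"
    and "w1 = w2 \<Longrightarrow> B\<^sup>2 = 4 * A * C"
  shows "A * (w1 + w2) = - B" and "A * (w1 * w2) = C"
proof -
  have sum: "A * (w1 + w2) + B = 0"
  proof (cases "w1 = w2")
    case True
    have "(2 * A * w1 + B)\<^sup>2 = 4 * A * (A * w1\<^sup>2 + B * w1 + C) + (B\<^sup>2 - 4 * A * C)"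
      by (simp add: algebra_simps power2_eq_square)
    then have "(2 * A * w1 + B)\<^sup>2 = 0" using assms(2) assms(4)[OF True] by simp
    then show ?thesis using True by (simp add: algebra_simps)
  next
    case False
    have "(w1 - w2) * (A * (w1 + w2) + B) = 0" using assms(2,3) by algebra
    then show ?thesis using False by simp
  qed
  then show "A * (w1 + w2) = - B" by (simp add: eq_neg_iff_add_eq_0)
  show "A * (w1 * w2) = C" using sum assms(2) by algebra
qed

lemma unit_quadratic_coeff_nonzero:
  assumes "0 < b" and "b < a" and "cmod z = 1"
  shows "of_real (a + b) * z\<^sup>2 + of_real (b - a) \<noteq> 0"
proof
  assume "of_real (a + b) * z\<^sup>2 + of_real (b - a) = 0"
  then have "of_real (a + b) * z\<^sup>2 = of_real (a - b)"
    by (simp add: algebra_simps eq_neg_iff_add_eq_0)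
  then have "cmod (of_real (a + b) * z\<^sup>2) = cmod (of_real (a - b))" by simp
  then have "\<bar>a + b\<bar> = \<bar>a - b\<bar>" by (simp only: norm_mult norm_power assms(3) norm_of_real) simp
  then show False using assms(1,2) by simp
qed

lemma caustic_chord_neighbours:
  assumes "0 < b" and "b < a" and "cmod z = 1" and "cmod zp = 1" and "cmod zn = 1"
    and "caustic_chord a b z zp" and "caustic_chord a b z zn"
    and "zp = zn \<Longrightarrow> normal_tangent_to_caustic a b z"
  shows "of_real (a - b) * (of_real (a + b) * z\<^sup>2 + of_real (b - a)) * (zp + zn) = of_real (4 * a * b) * z"
    and "(of_real (a + b) * z\<^sup>2 + of_real (b - a)) * (zp * zn) = of_real (b - a) * z\<^sup>2 + of_real (a + b)"
proof -
  define \<alpha> \<beta> :: complex where "\<alpha> = of_real (a + b) * z\<^sup>2 + of_real (b - a)"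
    and "\<beta> = of_real (b - a) * z\<^sup>2 + of_real (a + b)"
  have root: "of_real (a - b) * \<alpha> * w\<^sup>2 + (- of_real (4 * a * b) * z) * w + of_real (a - b) * \<beta> = 0"
    if "cmod w = 1" and "caustic_chord a b z w" for w
    using caustic_chord_biquadratic[OF assms(3) that] unfolding \<alpha>_def \<beta>_def by (simp add: algebra_simps)
  have double_root: "(- of_real (4 * a * b) * z)\<^sup>2 = 4 * (of_real (a - b) * \<alpha>) * (of_real (a - b) * \<beta>)"
    if "zp = zn"
  proof -
    define x y :: complex where "x = of_real (Re z)" "y = of_real (Im z)"
    have "z = x + \<i> * y" unfolding x_y_def by (simp add: complex_eq_iff)
    have "(Re z)\<^sup>2 + (Im z)\<^sup>2 = 1" using assms(3) by (simp add: cmod_def)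
    then have "x\<^sup>2 + y\<^sup>2 = 1" unfolding x_y_def by (metis of_real_1 of_real_add of_real_power)
    moreover have "(of_real a - of_real b)\<^sup>2 * ((of_real b)\<^sup>2 * x\<^sup>2 + (of_real a)\<^sup>2 * y\<^sup>2) = (of_real a)\<^sup>2 * (of_real b :: complex)\<^sup>2"
      using arg_cong[OF assms(8)[OF that, unfolded normal_tangent_to_caustic_def], of complex_of_real]
      unfolding x_y_def by simp
    moreover have "\<i>\<^sup>2 = (-1::complex)" by simp
    ultimately show ?thesis unfolding \<alpha>_def \<beta>_def \<open>z = x + \<i> * y\<close> of_real_add of_real_diff of_real_mult of_real_numeral
      by algebra
  qed
  have "of_real (a - b) * \<alpha> \<noteq> 0"
    using assms(1,2) unit_quadratic_coeff_nonzero[OF assms(1-3)] unfolding \<alpha>_def by simp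
  from quadratic_roots_sum_prod[OF this root[OF assms(4,6)] root[OF assms(5,7)] double_root]
  show "of_real (a - b) * (of_real (a + b) * z\<^sup>2 + of_real (b - a)) * (zp + zn) = of_real (4 * a * b) * z"
    and "(of_real (a + b) * z\<^sup>2 + of_real (b - a)) * (zp * zn) = of_real (b - a) * z\<^sup>2 + of_real (a + b)"
    using assms(1,2) unfolding \<alpha>_def \<beta>_def by (simp_all add: mult.assoc)
qed

lemma hexagon_edge_products:
  fixes a b :: "'a::field_char_0" and z :: "nat \<Rightarrow> 'a"
  assumes "a \<noteq> b" and "\<And>i. z (i + 6) = z i"
    and "\<And>i. (a + b) * (z i)\<^sup>2 + (b - a) \<noteq> 0"
    and "\<And>i. (a - b) * ((a + b) * (z (i + 1))\<^sup>2 + (b - a)) * (z i + z (i + 2)) = 4 * a * b * z (i + 1)"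
    and "\<And>i. ((a + b) * (z (i + 1))\<^sup>2 + (b - a)) * (z i * z (i + 2)) = (b - a) * (z (i + 1))\<^sup>2 + (a + b)"
  shows "(a - b) * (\<Sum>i<6. z i * z (i + 1)) = 2 * (a + b)"
proof -
  define \<alpha> where "\<alpha> i = (a + b) * (z i)\<^sup>2 + (b - a)" for i
  have at_vertex: "(a - b) * (z (i + 1) * (z i + z (i + 2))) = (a + b) + (a - b) * (z i * z (i + 2))" for i
  proof -
    have "\<alpha> (i + 1) * ((a - b) * (z (i + 1) * (z i + z (i + 2))))
        = \<alpha> (i + 1) * ((a + b) + (a - b) * (z i * z (i + 2)))"
      using assms(4,5)[of i] unfolding \<alpha>_def by algebra
    then show ?thesis using assms(3)[of "i + 1"] unfolding \<alpha>_def by simp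
  qed
  \<comment> \<open>Vieta at \<open>z 0\<close>, \<open>z 1\<close>, \<open>z 5\<close> gives the diagonal sum \<open>z 0 z 2 + z 2 z 4 + z 4 z 0\<close>;
     \<open>at_vertex\<close> at the odd vertices relates it to the sum over the six edges.\<close>
  have z6: "z 6 = z 0" and z7: "z 7 = z 1" using assms(2)[of 0] assms(2)[of 1] by simp_all
  have s0: "(a - b) * \<alpha> 0 * (z 5 + z 1) = 4 * a * b * z 0"
    and p0: "\<alpha> 0 * (z 5 * z 1) = (b - a) * (z 0)\<^sup>2 + (a + b)"
    using assms(4,5)[of 5] z6 z7 unfolding \<alpha>_def by (simp_all add: eval_nat_numeral)
  have s1: "(a - b) * \<alpha> 1 * (z 0 + z 2) = 4 * a * b * z 1"
    and p1: "\<alpha> 1 * (z 0 * z 2) = (b - a) * (z 1)\<^sup>2 + (a + b)"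
    using assms(4,5)[of 0] unfolding \<alpha>_def by (simp_all add: eval_nat_numeral)
  have s5: "(a - b) * \<alpha> 5 * (z 4 + z 0) = 4 * a * b * z 5"
    and p5: "\<alpha> 5 * (z 4 * z 0) = (b - a) * (z 5)\<^sup>2 + (a + b)"
    using assms(4,5)[of 4] z6 unfolding \<alpha>_def by (simp_all add: eval_nat_numeral)
  have "a - b \<noteq> 0" using assms(1) by simp
  have "\<alpha> 1 * \<alpha> 5 * ((a - b) * (z 0 * z 2 + z 2 * z 4 + z 4 * z 0)) = \<alpha> 1 * \<alpha> 5 * (- (a + b))"
    using \<open>a - b \<noteq> 0\<close> s0 p0 s1 p1 s5 p5 unfolding \<alpha>_def by algebra
  then have "(a - b) * (z 0 * z 2 + z 2 * z 4 + z 4 * z 0) = - (a + b)"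
    using assms(3)[of 1] assms(3)[of 5] unfolding \<alpha>_def by simp
  moreover have "(\<Sum>i<6. z i * z (i + 1)) = z 0 * z 1 + z 1 * z 2 + z 2 * z 3 + z 3 * z 4 + z 4 * z 5 + z 5 * z 0"
    using z6 by (simp add: eval_nat_numeral)
  ultimately show ?thesis using at_vertex[of 0] at_vertex[of 2] at_vertex[of 4] z6
    by (simp add: eval_nat_numeral) algebra
qed

lemma caustic_hexagon_edge_products:
  fixes z :: "nat \<Rightarrow> complex"
  assumes "0 < b" and "b < a" and "\<And>i. cmod (z i) = 1" and "\<And>i. z (i + 6) = z i"
    and "\<And>i. caustic_chord a b (z i) (z (i + 1))"
    and "\<And>i. z i = z (i + 2) \<Longrightarrow> normal_tangent_to_caustic a b (z (i + 1))"
  shows "(a - b) * (\<Sum>i<6. Re (z i * z (i + 1))) = 2 * (a + b)"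
proof -
  have chord_prev: "caustic_chord a b (z (i + 1)) (z i)" and chord_next: "caustic_chord a b (z (i + 1)) (z (i + 2))" for i
    using assms(5)[of i] assms(5)[of "i + 1"] caustic_chord_commute by (simp_all add: add.assoc)
  note neighbours = caustic_chord_neighbours[OF assms(1,2) assms(3) assms(3) assms(3) chord_prev chord_next assms(6)]
  have "(of_real a - of_real b) * (\<Sum>i<6. z i * z (i + 1)) = 2 * (of_real a + of_real b)"
  proof (rule hexagon_edge_products)
    show "of_real a \<noteq> (of_real b :: complex)" using assms(2) by simp
    show "(of_real a + of_real b) * (z i)\<^sup>2 + (of_real b - of_real a) \<noteq> 0" for i
      using unit_quadratic_coeff_nonzero[OF assms(1,2,3)] by simp
  qed (use assms(4) neighbours in simp_all)
  then have "Re (of_real (a - b) * (\<Sum>i<6. z i * z (i + 1))) = Re (of_real (2 * (a + b)))" by simp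
  then show ?thesis by (simp add: Re_sum)
qed

lemma typeI_6periodic_eccentric_anomalies:
  assumes "0 < b" and "2 * b < a" and "typeI_6periodic a b P"
  obtains z :: "nat \<Rightarrow> complex"
  where "\<And>i. P i = (a * Re (z i), b * Im (z i))" and "\<And>i. cmod (z i) = 1" and "\<And>i. z (i + 6) = z i"
    and "\<And>i. caustic_chord a b (z i) (z (i + 1))"
    and "\<And>i. z i = z (i + 2) \<Longrightarrow> normal_tangent_to_caustic a b (z (i + 1))"
proof
  have "0 < a" "b < a" using assms(1,2) by simp_all
  note periodic = assms(3)[unfolded typeI_6periodic_def billiard_periodic_def]
  define z where "z i = Complex (fst (P i) / a) (snd (P i) / b)" for i
  show P: "P i = (a * Re (z i), b * Im (z i))" for i
    unfolding z_def using \<open>0 < a\<close> assms(1) by (simp add: prod_eq_iff)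
  show unit: "cmod (z i) = 1" for i
    using periodic unfolding z_def on_ellipse_def by (simp add: cmod_def power_divide)
  show "z (i + 6) = z i" for i unfolding z_def using periodic by simp
  have distinct: "z i \<noteq> z (i + 1)" for i
  proof -
    have "P i \<noteq> P (i + 1)" using periodic unfolding billiard_reflects_def by blast
    then show ?thesis using P[of i] P[of "i + 1"] by auto
  qed
  show chord: "caustic_chord a b (z i) (z (i + 1))" for i
    using tangent_to_caustic_imp_caustic_chord[OF assms(1,2) unit unit distinct] periodic P by simp
  show "normal_tangent_to_caustic a b (z (i + 1))" if "z i = z (i + 2)" for i
  proof (rule caustic_chord_along_normal[OF assms(1) \<open>b < a\<close> unit unit])
    show "z (i + 1) \<noteq> z i" using distinct[of i] by simp
    show "caustic_chord a b (z (i + 1)) (z i)" using chord[of i] caustic_chord_commute by blast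
    have "billiard_reflects a b (P i) (P (i + 1)) (P i)"
      using periodic that P[of i] P[of "i + 2"] by (metis add_2_eq_Suc')
    from billiard_reflects_back[OF this]
    show "cross2 ((a * Re (z i), b * Im (z i)) - (a * Re (z (i + 1)), b * Im (z (i + 1))))
        (ell_normal a b (a * Re (z (i + 1)), b * Im (z (i + 1)))) = 0"
      unfolding P[symmetric] .
  qed
qed

lemma joachimsthal_perimeter:
  assumes "b < a"
  shows "joachJ a b * perimL a b - 6 = - 2 * (a\<^sup>2 - 4 * a * b + b\<^sup>2) / (a - b)\<^sup>2"
proof -
  have "(a - b)\<^sup>2 \<noteq> 0" using assms by simp
  have "joachJ a b * perimL a b - 6 = 4 * (a\<^sup>2 - a * b + b\<^sup>2) / (a - b)\<^sup>2 - 6"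
    unfolding joachJ_def perimL_def by (simp add: power2_eq_square)
  also have "\<dots> = (4 * (a\<^sup>2 - a * b + b\<^sup>2) - 6 * (a - b)\<^sup>2) / (a - b)\<^sup>2"
    using \<open>(a - b)\<^sup>2 \<noteq> 0\<close> by (simp add: diff_divide_distrib)
  also have "4 * (a\<^sup>2 - a * b + b\<^sup>2) - 6 * (a - b)\<^sup>2 = - 2 * (a\<^sup>2 - 4 * a * b + b\<^sup>2)" by algebra
  finally show ?thesis .
qed

theorem mainTheorem15:
  fixes a b :: real and P :: "nat \<Rightarrow> real \<times> real"
  assumes "0 < b" and "2 * b < a"
    and "typeI_6periodic a b P"
  shows "(\<Sum>i<6. cos (2 * outer_angle a b P i)) = - 2 * (a\<^sup>2 - 4*a*b + b\<^sup>2) / (a - b)\<^sup>2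
       \<and> - 2 * (a\<^sup>2 - 4*a*b + b\<^sup>2) / (a - b)\<^sup>2 = joachJ a b * perimL a b - 6"
proof -
  have "b < a" using assms(1,2) by simp
  obtain z where P: "\<And>i. P i = (a * Re (z i), b * Im (z i))" and unit: "\<And>i. cmod (z i) = 1"
    and periodic: "\<And>i. z (i + 6) = z i" and chord: "\<And>i. caustic_chord a b (z i) (z (i + 1))"
    and normal: "\<And>i. z i = z (i + 2) \<Longrightarrow> normal_tangent_to_caustic a b (z (i + 1))"
    using typeI_6periodic_eccentric_anomalies[OF assms] by blast
  have cos: "(a - b)\<^sup>2 * cos (2 * outer_angle a b P i) = 2 * a * b - (a\<^sup>2 - b\<^sup>2) * Re (z i * z (i + 1))" for i
    unfolding outer_angle_def P by (rule cos_double_tangent_angle_Re[OF assms(1) \<open>b < a\<close> unit unit chord])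
  have hexagon: "(a - b) * (\<Sum>i<6. Re (z i * z (i + 1))) = 2 * (a + b)"
    using assms(1) \<open>b < a\<close> unit periodic chord normal by (rule caustic_hexagon_edge_products)
  have "(a - b)\<^sup>2 * (\<Sum>i<6. cos (2 * outer_angle a b P i))
      = (\<Sum>i<6::nat. 2 * a * b - (a\<^sup>2 - b\<^sup>2) * Re (z i * z (i + 1)))"
    by (simp only: sum_distrib_left cos)
  also have "\<dots> = 12 * a * b - (a + b) * ((a - b) * (\<Sum>i<6. Re (z i * z (i + 1))))"
    unfolding sum_subtractf sum_distrib_left[symmetric] sum_constant card_lessThan of_nat_numeral by algebra
  also have "\<dots> = - 2 * (a\<^sup>2 - 4 * a * b + b\<^sup>2)"
    using hexagon by algebra
  finally show ?thesis
    using joachimsthal_perimeter[OF \<open>b < a\<close>] \<open>b < a\<close> by (simp add: field_simps)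
qed

end
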